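(* Let $\mathcal P\subseteq 2^{[n]}$ be a nonempty intersection-closed family. Then $\beta_{1,m}(I^\star_{\mathtt C(\mathcal P)})\neq0$ if and only if $m=m(A,B)$ for some $A,B\in\mathcal P$ with $B$ covering $A$ (i.e. $A<B$ and no $C\in\mathcal P$ satisfies $A<C<B$), in which case it equals $1$. Consequently the minimal generators of the first syzygy module of $I^\star_{\mathtt C(\mathcal P)}$ are in bijection with the cover relations of $\mathcal P$.
   Context: For $n\in\mathbb N$ let $[n]=\{0,\dots,n-1\}$. Fix a field $\Bbbk$, $S=\Bbbk[x_{(i,b)}: i\in[n], b\in\{0,1\}]$ multigraded by monomials; $\beta_{i,m}(M)=\dim_\Bbbk\operatorname{Tor}_i^S(M,\Bbbk)_m$. For $\mathcal P\subseteq 2^{[n]}$ ordered by inclusion, $\mathtt C(\mathcal P)=\{\mathbf 1_A:A\in\mathcal P\}$; intersection-closed means $A,B\in\mathcal P\Rightarrow A\cap B\in\mathcal P$. $I^\star_{\mathtt C}=\langle\prod_{i\in[n]}x_{(i,1-f(i))}: f\in\mathtt C\rangle$. For $A\subseteq B\subseteq[n]$, $m(A,B):=\prod_{i\in A}x_{(i,0)}\prod_{i\notin B}x_{(i,1)}\prod_{i\in B\setminus A}x_{(i,0)}x_{(i,1)}$. *)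

theory Defs
  imports Main HOL.Vector_Spaces "HOL-Library.Function_Algebras"
begin

text \<open>Variables of S are x_(i,b) with i < n, b < 2.  A monomial of S is identified
with its exponent vector (nat \<times> nat \<Rightarrow> nat), vanishing outside vars n.\<close>

definition vars :: "nat \<Rightarrow> (nat \<times> nat) set" where
  "vars n = {0..<n} \<times> {0..<2}"

definition is_monomial :: "nat \<Rightarrow> (nat \<times> nat \<Rightarrow> nat) \<Rightarrow> bool" where
  "is_monomial n u \<longleftrightarrow> (\<forall>v. v \<notin> vars n \<longrightarrow> u v = 0)"

definition ind :: "nat set \<Rightarrow> nat \<Rightarrow> nat" where
  "ind A = (\<lambda>i. if i \<in> A then 1 else 0)"

definition Cfam :: "nat set set \<Rightarrow> (nat \<Rightarrow> nat) set" where
  "Cfam P = ind ` P"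

definition intersection_closed :: "nat set set \<Rightarrow> bool" where
  "intersection_closed P \<longleftrightarrow> (\<forall>A\<in>P. \<forall>B\<in>P. A \<inter> B \<in> P)"

definition gen_mon :: "nat \<Rightarrow> (nat \<Rightarrow> nat) \<Rightarrow> (nat \<times> nat \<Rightarrow> nat)" where
  "gen_mon n f = (\<lambda>(i,b). if i < n \<and> b = 1 - f i then 1 else 0)"

definition Istar_gens :: "nat \<Rightarrow> (nat \<Rightarrow> nat) set \<Rightarrow> (nat \<times> nat \<Rightarrow> nat) set" where
  "Istar_gens n C = gen_mon n ` C"

definition mAB :: "nat \<Rightarrow> nat set \<Rightarrow> nat set \<Rightarrow> (nat \<times> nat \<Rightarrow> nat)" where
  "mAB n A B = (\<lambda>(i,b). if i < n \<and> b < 2 then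
      (if i \<in> A then (if b = 0 then 1 else 0)
       else if i \<notin> B then (if b = 1 then 1 else 0)
       else 1) else 0)"

definition covers :: "nat set set \<Rightarrow> nat set \<Rightarrow> nat set \<Rightarrow> bool" where
  "covers P A B \<longleftrightarrow> A \<subset> B \<and> \<not> (\<exists>C\<in>P. A \<subset> C \<and> C \<subset> B)"

text \<open>Multigraded first Betti number beta_{1,u}(I) = dim_k Tor_1^S(I,k)_u of a monomial
ideal I generated by a finite set G of monomials, computed from the minimal free
presentation  0 -> K -> F -> I -> 0, F = (+)_{g minimal generator} S(-g):
Tor_1(I,k) = K / m K.  In multidegree u, F_u has basis x^(u-g) e_g for the minimal
generators g dividing u; an element is a coefficient function c, and it lies in K_u
iff sum of c g = 0.  (m K)_u = sum over variables v with x_v | u of x_v K_(u - e_v),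
and multiplication by x_v keeps the coefficient function unchanged.\<close>

definition divides_mon :: "('v \<Rightarrow> nat) \<Rightarrow> ('v \<Rightarrow> nat) \<Rightarrow> bool" where
  "divides_mon g u \<longleftrightarrow> (\<forall>v. g v \<le> u v)"

definition min_gens :: "('v \<Rightarrow> nat) set \<Rightarrow> ('v \<Rightarrow> nat) set" where
  "min_gens G = {g \<in> G. \<forall>h\<in>G. divides_mon h g \<longrightarrow> h = g}"

definition syz_deg :: "'k::field itself \<Rightarrow> ('v \<Rightarrow> nat) set \<Rightarrow> ('v \<Rightarrow> nat)
    \<Rightarrow> (('v \<Rightarrow> nat) \<Rightarrow> 'k) set" where
  "syz_deg _ G u = {c. (\<forall>g. c g \<noteq> 0 \<longrightarrow> g \<in> min_gens G \<and> divides_mon g u)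
                       \<and> (\<Sum>g\<in>min_gens G. c g) = 0}"

definition fscale :: "'k::field \<Rightarrow> ('a \<Rightarrow> 'k) \<Rightarrow> ('a \<Rightarrow> 'k)" where
  "fscale a f = (\<lambda>x. a * f x)"

definition max_syz_deg :: "'k::field itself \<Rightarrow> ('v \<Rightarrow> nat) set \<Rightarrow> ('v \<Rightarrow> nat)
    \<Rightarrow> (('v \<Rightarrow> nat) \<Rightarrow> 'k) set" where
  "max_syz_deg K G u = module.span fscale
      (\<Union>v\<in>{v. u v > 0}. syz_deg K G (u(v := u v - 1)))"

definition betti1 :: "'k::field itself \<Rightarrow> ('v \<Rightarrow> nat) set \<Rightarrow> ('v \<Rightarrow> nat) \<Rightarrow> nat" where
  "betti1 K G u = vector_space.dim (fscale :: 'k \<Rightarrow> _) (syz_deg K G u)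
                 - vector_space.dim (fscale :: 'k \<Rightarrow> _) (max_syz_deg K G u)"

end

theory Submission
  imports Defs "HOL-Library.Indicator_Function"
begin

text \<open>
  A first syzygy of degree u is a combination of differences e_g - e_h of minimal generators
  dividing u, and e_g - e_h already lives in a degree u/x_v exactly when g and h both divide
  u/x_v; call such g and h linked.  Hence beta_{1,u} = 0 when the generators dividing u form a
  connected graph under this relation, and beta_{1,u} = 1 when they are just two unlinked ones.

  For I*_C all generators are squarefree, so they are pairwise linked over any u with an exponent
  at least 2.  A squarefree u that is divisible by some generator is m(A,B) with A \<subseteq> B; the
  generators dividing it are those of the sets C \<in> P with A \<subseteq> C \<subseteq> B, and those of C and D are
  unlinked iff C \<inter> D = A and C \<union> D = B.  If A \<notin> P, then C \<inter> D \<in> P is never A and everything is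
  linked.  If A \<in> P, the generator of A is linked to every other one except that of B, which is
  reached through any set strictly between A and B; only when B covers A are there exactly two
  unlinked generators.
\<close>

section \<open>First syzygies of a monomial ideal\<close>

interpretation fscale: vector_space "fscale :: 'k::field \<Rightarrow> ('a \<Rightarrow> 'k) \<Rightarrow> ('a \<Rightarrow> 'k)"
  by unfold_locales (auto simp: fscale_def fun_eq_iff algebra_simps)

lemma sum_fun_apply: "(\<Sum>a\<in>A. f a) x = (\<Sum>a\<in>A. f a x)"
  by (induction A rule: infinite_finite_induct) auto

lemma divides_mon_trans: "divides_mon g h \<Longrightarrow> divides_mon h u \<Longrightarrow> divides_mon g u"
  unfolding divides_mon_def using order_trans by metis

lemma divides_mon_decrement: "divides_mon (u(v := u v - 1)) u"
  unfolding divides_mon_def by simp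

lemma divides_mon_decrement_iff:
  assumes "0 < u v"
  shows "divides_mon g (u(v := u v - 1)) \<longleftrightarrow> divides_mon g u \<and> g v < u v"
proof
  assume "divides_mon g (u(v := u v - 1))"
  then have "g w \<le> (u(v := u v - 1)) w" for w
    unfolding divides_mon_def by blast
  from this[of v] this assms show "divides_mon g u \<and> g v < u v"
    unfolding divides_mon_def by (metis diff_le_self fun_upd_apply le_trans Suc_pred' less_Suc_eq_le)
next
  assume "divides_mon g u \<and> g v < u v"
  then show "divides_mon g (u(v := u v - 1))"
    unfolding divides_mon_def by auto
qed

definition gens_dividing :: "('v \<Rightarrow> nat) set \<Rightarrow> ('v \<Rightarrow> nat) \<Rightarrow> ('v \<Rightarrow> nat) set" where
  "gens_dividing G u = {g \<in> min_gens G. divides_mon g u}"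

definition linked :: "('v \<Rightarrow> nat) set \<Rightarrow> ('v \<Rightarrow> nat) \<Rightarrow> ('v \<Rightarrow> nat) \<Rightarrow> ('v \<Rightarrow> nat) \<Rightarrow> bool" where
  "linked G u g h \<longleftrightarrow> g \<in> min_gens G \<and> h \<in> min_gens G \<and>
     (\<exists>v. 0 < u v \<and> divides_mon g (u(v := u v - 1)) \<and> divides_mon h (u(v := u v - 1)))"

lemma linked_sym: "linked G u g h \<Longrightarrow> linked G u h g"
  unfolding linked_def by blast

lemma linked_iff_exponent:
  assumes "g \<in> gens_dividing G u" "h \<in> gens_dividing G u"
  shows "linked G u g h \<longleftrightarrow> (\<exists>v. g v < u v \<and> h v < u v)"
proof
  assume "linked G u g h"
  then obtain v where "0 < u v"
    and "divides_mon g (u(v := u v - 1))" "divides_mon h (u(v := u v - 1))"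
    unfolding linked_def by blast
  then show "\<exists>v. g v < u v \<and> h v < u v"
    using divides_mon_decrement_iff[of u v] by blast
next
  assume "\<exists>v. g v < u v \<and> h v < u v"
  then obtain v where "g v < u v" "h v < u v"
    by blast
  moreover from this have "0 < u v"
    by simp
  ultimately show "linked G u g h"
    using assms divides_mon_decrement_iff[of u v]
    unfolding linked_def gens_dividing_def by blast
qed

lemma syz_deg_iff:
  "c \<in> syz_deg K G u \<longleftrightarrow>
     (\<forall>g. c g \<noteq> 0 \<longrightarrow> g \<in> gens_dividing G u) \<and> (\<Sum>g\<in>min_gens G. c g) = 0"
  unfolding syz_deg_def gens_dividing_def by blast

lemma sum_syz_deg_gens_dividing:
  assumes "finite (min_gens G)" "c \<in> syz_deg K G u"
  shows "(\<Sum>g\<in>gens_dividing G u. c g) = 0"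
proof -
  have "(\<Sum>g\<in>gens_dividing G u. c g) = (\<Sum>g\<in>min_gens G. c g)"
    using assms by (intro sum.mono_neutral_left) (auto simp: syz_deg_iff gens_dividing_def)
  with assms(2) show ?thesis
    by (simp add: syz_deg_iff)
qed

lemma syz_deg_subspace: "fscale.subspace (syz_deg TYPE('k::field) G u)"
  unfolding fscale.subspace_def
proof (intro conjI ballI allI)
  show "0 \<in> syz_deg TYPE('k) G u"
    by (simp add: syz_deg_iff)
  fix c d :: "_ \<Rightarrow> 'k" and a :: 'k
  assume c: "c \<in> syz_deg TYPE('k) G u"
  then show "fscale a c \<in> syz_deg TYPE('k) G u"
    by (simp add: syz_deg_iff fscale_def flip: sum_distrib_left)
  assume d: "d \<in> syz_deg TYPE('k) G u"
  have "(c + d) g \<noteq> 0 \<Longrightarrow> c g \<noteq> 0 \<or> d g \<noteq> 0" for g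
    by auto
  with c d show "c + d \<in> syz_deg TYPE('k) G u"
    by (simp add: syz_deg_iff sum.distrib) blast
qed

lemma syz_deg_mono:
  assumes "divides_mon u' u"
  shows "syz_deg K G u' \<subseteq> syz_deg K G u"
  unfolding syz_deg_def using divides_mon_trans[OF _ assms] by blast

lemma syz_deg_subset_zero:
  assumes "finite (min_gens G)" "gens_dividing G u \<subseteq> {g}"
  shows "syz_deg K G u \<subseteq> {0}"
proof
  fix c assume c: "c \<in> syz_deg K G u"
  have off_g: "c x = 0" if "x \<noteq> g" for x
    using assms(2) c that by (auto simp: syz_deg_iff)
  have "(\<Sum>x\<in>gens_dividing G u. c x) = (\<Sum>x\<in>{g}. c x)"
    using assms off_g c by (intro sum.mono_neutral_left) (auto simp: syz_deg_iff)
  with sum_syz_deg_gens_dividing[OF assms(1) c] have "c g = 0"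
    by simp
  with off_g have "c = 0"
    by (intro ext) (metis zero_fun_apply)
  then show "c \<in> {0}"
    by simp
qed

lemma max_syz_deg_subset_syz_deg: "max_syz_deg TYPE('k::field) G u \<subseteq> syz_deg TYPE('k) G u"
  unfolding max_syz_deg_def
  by (intro fscale.span_minimal syz_deg_subspace UN_least syz_deg_mono divides_mon_decrement)

lemma betti1_eq_0I:
  "syz_deg TYPE('k::field) G u \<subseteq> max_syz_deg TYPE('k) G u \<Longrightarrow> betti1 TYPE('k) G u = 0"
  using max_syz_deg_subset_syz_deg unfolding betti1_def by (metis diff_self_eq_0 subset_antisym)

lemma indicator_diff_in_syz_deg:
  assumes "finite (min_gens G)" "g \<in> gens_dividing G u" "h \<in> gens_dividing G u"
  shows "(indicator {g} - indicator {h} :: _ \<Rightarrow> 'k::field) \<in> syz_deg TYPE('k) G u"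
  using assms by (auto simp: syz_deg_iff gens_dividing_def indicator_def sum.distrib sum_subtractf)

lemma linked_indicator_diff_in_max_syz_deg:
  assumes "finite (min_gens G)" "linked G u g h"
  shows "(indicator {g} - indicator {h} :: _ \<Rightarrow> 'k::field) \<in> max_syz_deg TYPE('k) G u"
proof -
  from assms(2) obtain v where "0 < u v"
    and "g \<in> gens_dividing G (u(v := u v - 1))" "h \<in> gens_dividing G (u(v := u v - 1))"
    unfolding linked_def gens_dividing_def by blast
  with indicator_diff_in_syz_deg[OF assms(1)] show ?thesis
    unfolding max_syz_deg_def by (blast intro: fscale.span_base)
qed

text \<open>The center is arbitrary, as the coefficients of a syzygy sum to zero.\<close>
lemma syz_deg_eq_sum_differences:
  assumes "finite (min_gens G)" "c \<in> syz_deg TYPE('k::field) G u"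
  shows "c = (\<Sum>h\<in>gens_dividing G u. fscale (c h) (indicator {h} - indicator {center}))"
proof
  fix x
  have "finite (gens_dividing G u)"
    using assms(1) unfolding gens_dividing_def by simp
  then have "(\<Sum>h\<in>gens_dividing G u. fscale (c h) (indicator {h} - indicator {center})) x
      = (if x \<in> gens_dividing G u then c x else 0) - (\<Sum>h\<in>gens_dividing G u. c h) * indicator {center} x"
    by (simp add: sum_fun_apply fscale_def right_diff_distrib sum_subtractf indicator_def
        flip: sum_distrib_right)
  also have "\<dots> = c x"
    using assms by (auto simp: sum_syz_deg_gens_dividing syz_deg_iff)
  finally show "c x = (\<Sum>h\<in>gens_dividing G u. fscale (c h) (indicator {h} - indicator {center})) x" ..
qed

lemma betti1_eq_0_if_connected:
  assumes "finite (min_gens G)" "\<forall>h\<in>gens_dividing G u. (linked G u)\<^sup>*\<^sup>* center h"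
  shows "betti1 TYPE('k::field) G u = 0"
proof (intro betti1_eq_0I subsetI)
  have reach: "(indicator {h} - indicator {center} :: _ \<Rightarrow> 'k) \<in> max_syz_deg TYPE('k) G u"
    if "(linked G u)\<^sup>*\<^sup>* center h" for h
    using that
  proof (induction rule: rtranclp_induct)
    case base
    show ?case
      unfolding diff_self max_syz_deg_def by (rule fscale.span_zero)
  next
    case (step h h')
    have edge: "(indicator {h'} - indicator {h} :: _ \<Rightarrow> 'k) \<in> max_syz_deg TYPE('k) G u"
      using linked_indicator_diff_in_max_syz_deg[OF assms(1) linked_sym[OF step(2)]] .
    have "(indicator {h'} - indicator {h}) + (indicator {h} - indicator {center})
        \<in> max_syz_deg TYPE('k) G u"
      using edge step(3) unfolding max_syz_deg_def by (rule fscale.span_add)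
    then show ?case
      by (simp only: add_diff_eq diff_add_cancel)
  qed
  fix c assume "c \<in> syz_deg TYPE('k) G u"
  then have "c = (\<Sum>h\<in>gens_dividing G u. fscale (c h) (indicator {h} - indicator {center}))"
    by (rule syz_deg_eq_sum_differences[OF assms(1)])
  also have "\<dots> \<in> max_syz_deg TYPE('k) G u"
    unfolding max_syz_deg_def
    by (intro fscale.span_sum fscale.span_scale reach[unfolded max_syz_deg_def]) (use assms(2) in blast)
  finally show "c \<in> max_syz_deg TYPE('k) G u" .
qed

lemma betti1_eq_0_if_pairwise_linked:
  assumes "finite (min_gens G)"
    and "\<forall>g\<in>gens_dividing G u. \<forall>h\<in>gens_dividing G u. g \<noteq> h \<longrightarrow> linked G u g h"
  shows "betti1 TYPE('k::field) G u = 0"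
proof -
  obtain center where "\<forall>h\<in>gens_dividing G u. (linked G u)\<^sup>*\<^sup>* center h"
  proof (cases "gens_dividing G u = {}")
    case False
    then obtain center where "center \<in> gens_dividing G u"
      by blast
    have "(linked G u)\<^sup>*\<^sup>* center h" if "h \<in> gens_dividing G u" for h
      using assms(2) \<open>center \<in> gens_dividing G u\<close> that by (cases "center = h") auto
    then show thesis
      by (blast intro: that)
  qed (rule that, simp)
  with assms(1) show ?thesis
    by (rule betti1_eq_0_if_connected)
qed

lemma dim_max_syz_deg_eq_0_if_two_unlinked:
  assumes fin: "finite (min_gens G)" and Gu: "gens_dividing G u = {g1, g2}"
    and unlinked: "\<not> linked G u g1 g2"
  shows "fscale.dim (max_syz_deg TYPE('k::field) G u) = 0"
proof -
  have "syz_deg TYPE('k) G (u(v := u v - 1)) \<subseteq> {0}" if "0 < u v" for v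
  proof -
    have "gens_dividing G (u(v := u v - 1)) \<subseteq> {g1, g2}"
      unfolding Gu[symmetric] gens_dividing_def
      using divides_mon_trans[OF _ divides_mon_decrement[of u v]] by blast
    moreover have "\<not> {g1, g2} \<subseteq> gens_dividing G (u(v := u v - 1))"
      using unlinked that by (auto simp: linked_def gens_dividing_def)
    ultimately have "gens_dividing G (u(v := u v - 1)) \<subseteq> {g1} \<or>
        gens_dividing G (u(v := u v - 1)) \<subseteq> {g2}"
      by blast
    then show ?thesis
      using syz_deg_subset_zero[OF fin] by blast
  qed
  then have "max_syz_deg TYPE('k) G u \<subseteq> fscale.span {}"
    unfolding max_syz_deg_def
    by (intro fscale.span_minimal fscale.subspace_span) (auto simp: fscale.span_empty)
  then show ?thesis
    using fscale.dim_le_card[OF _ finite.emptyI] by simp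
qed

lemma syz_deg_eq_span_indicator_diff:
  assumes fin: "finite (min_gens G)" and Gu: "gens_dividing G u = {g1, g2}" and "g1 \<noteq> g2"
  shows "syz_deg TYPE('k::field) G u = fscale.span {indicator {g1} - indicator {g2}}"
    (is "_ = fscale.span {?w}")
proof
  show "fscale.span {?w} \<subseteq> syz_deg TYPE('k) G u"
    using indicator_diff_in_syz_deg[OF fin, of g1 u g2] Gu
    by (intro fscale.span_minimal syz_deg_subspace) auto
  show "syz_deg TYPE('k) G u \<subseteq> fscale.span {?w}"
  proof
    fix c :: "_ \<Rightarrow> 'k" assume c: "c \<in> syz_deg TYPE('k) G u"
    then have "c g1 + c g2 = 0"
      using sum_syz_deg_gens_dividing[OF fin c] Gu \<open>g1 \<noteq> g2\<close> by simp
    have "c x = fscale (c g1) ?w x" for x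
    proof -
      consider "x = g1" | "x = g2" | "x \<notin> gens_dividing G u"
        using Gu by blast
      then show ?thesis
        using c Gu \<open>c g1 + c g2 = 0\<close> \<open>g1 \<noteq> g2\<close>
        by cases (auto simp: fscale_def syz_deg_iff indicator_def eq_neg_iff_add_eq_0 add.commute)
    qed
    then have "c = fscale (c g1) ?w" ..
    then show "c \<in> fscale.span {?w}"
      by (metis fscale.span_base fscale.span_scale singletonI)
  qed
qed

lemma betti1_eq_1_if_two_unlinked:
  assumes fin: "finite (min_gens G)" and Gu: "gens_dividing G u = {g1, g2}"
    and "g1 \<noteq> g2" and "\<not> linked G u g1 g2"
  shows "betti1 TYPE('k::field) G u = 1"
proof -
  let ?w = "indicator {g1} - indicator {g2} :: _ \<Rightarrow> 'k"
  have "?w \<noteq> 0"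
    using \<open>g1 \<noteq> g2\<close> by (auto simp: fun_eq_iff indicator_def)
  then have "fscale.independent {?w}"
    by (intro fscale.independent_insertI fscale.independent_empty) (simp add: fscale.span_empty)
  from fscale.dim_span_eq_card_independent[OF this] have "fscale.dim (fscale.span {?w}) = 1"
    by simp
  then show ?thesis
    unfolding betti1_def syz_deg_eq_span_indicator_diff[OF fin Gu \<open>g1 \<noteq> g2\<close>]
      dim_max_syz_deg_eq_0_if_two_unlinked[OF fin Gu \<open>\<not> linked G u g1 g2\<close>]
    by (simp only: diff_zero)
qed

section \<open>The generators of I*_C over the degrees m(A,B)\<close>

abbreviation star_gen :: "nat \<Rightarrow> nat set \<Rightarrow> (nat \<times> nat \<Rightarrow> nat)" where
  "star_gen n A \<equiv> gen_mon n (ind A)"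

definition interval :: "nat set set \<Rightarrow> nat set \<Rightarrow> nat set \<Rightarrow> nat set set" where
  "interval P A B = {C \<in> P. A \<subseteq> C \<and> C \<subseteq> B}"

lemma star_gen_apply:
  "star_gen n A (i, b) = (if i < n \<and> (i \<in> A \<and> b = 0 \<or> i \<notin> A \<and> b = 1) then 1 else 0)"
  unfolding gen_mon_def ind_def by auto

lemma star_gen_le_1: "star_gen n A v \<le> 1"
  by (cases v) (simp add: star_gen_apply)

lemma mAB_apply:
  "mAB n A B (i, b) = (if i < n \<and> (b = 0 \<and> (i \<in> A \<or> i \<in> B) \<or> b = 1 \<and> i \<notin> A) then 1 else 0)"
  unfolding mAB_def by auto

lemma mAB_is_monomial: "is_monomial n (mAB n A B)"
  unfolding is_monomial_def vars_def by (auto simp: mAB_apply)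

lemma mAB_exponent_sets:
  assumes "A \<subseteq> B" "B \<subseteq> {0..<n}"
  shows "{i. i < n \<and> mAB n A B (i, 1) = 0} = A" "{i. i < n \<and> mAB n A B (i, 0) \<noteq> 0} = B"
  using assms by (auto simp: mAB_apply)

lemma inj_on_mAB: "inj_on (\<lambda>(A, B). mAB n A B) {(A, B). A \<subseteq> B \<and> B \<subseteq> {0..<n}}"
proof (rule inj_onI)
  fix x y
  assume "x \<in> {(A, B). A \<subseteq> B \<and> B \<subseteq> {0..<n}}" "y \<in> {(A, B). A \<subseteq> B \<and> B \<subseteq> {0..<n}}"
    and eq: "(\<lambda>(A, B). mAB n A B) x = (\<lambda>(A, B). mAB n A B) y"
  then obtain A B A' B' where "x = (A, B)" "y = (A', B')"
    and "A \<subseteq> B" "B \<subseteq> {0..<n}" "A' \<subseteq> B'" "B' \<subseteq> {0..<n}"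
    by blast
  with eq show "x = y"
    using mAB_exponent_sets[of A B n] mAB_exponent_sets[of A' B' n] by simp
qed

lemma divides_star_gen_iff:
  "divides_mon (star_gen n C) u \<longleftrightarrow> (\<forall>i<n. (i \<in> C \<longrightarrow> 0 < u (i, 0)) \<and> (i \<notin> C \<longrightarrow> 0 < u (i, 1)))"
proof
  assume "divides_mon (star_gen n C) u"
  then have "star_gen n C (i, b) \<le> u (i, b)" for i b
    unfolding divides_mon_def by blast
  show "\<forall>i<n. (i \<in> C \<longrightarrow> 0 < u (i, 0)) \<and> (i \<notin> C \<longrightarrow> 0 < u (i, 1))"
  proof (intro allI impI conjI)
    fix i assume "i < n"
    show "0 < u (i, 0)" if "i \<in> C"
      using \<open>star_gen n C (i, 0) \<le> u (i, 0)\<close> \<open>i < n\<close> that by (simp add: star_gen_apply)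
    show "0 < u (i, 1)" if "i \<notin> C"
      using \<open>star_gen n C (i, 1) \<le> u (i, 1)\<close> \<open>i < n\<close> that by (simp add: star_gen_apply)
  qed
next
  assume "\<forall>i<n. (i \<in> C \<longrightarrow> 0 < u (i, 0)) \<and> (i \<notin> C \<longrightarrow> 0 < u (i, 1))"
  then show "divides_mon (star_gen n C) u"
    unfolding divides_mon_def by (auto simp: star_gen_apply)
qed

lemma star_gen_dvd_imp_eq:
  assumes "A \<subseteq> {0..<n}" "C \<subseteq> {0..<n}" "divides_mon (star_gen n C) (star_gen n A)"
  shows "C = A"
proof -
  have "\<forall>i<n. i \<in> C \<longleftrightarrow> i \<in> A"
    using assms(3) unfolding divides_star_gen_iff by (auto simp: star_gen_apply split: if_splits)
  with assms(1,2) show ?thesis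
    by auto
qed

lemma min_gens_Istar_gens:
  assumes "P \<subseteq> Pow {0..<n}"
  shows "min_gens (Istar_gens n (Cfam P)) = star_gen n ` P"
proof -
  have gens: "Istar_gens n (Cfam P) = star_gen n ` P"
    unfolding Istar_gens_def Cfam_def by (simp add: image_image)
  have "star_gen n C = star_gen n A"
    if "A \<in> P" "C \<in> P" "divides_mon (star_gen n C) (star_gen n A)" for A C
    using star_gen_dvd_imp_eq[of A n C] assms that by blast
  then show ?thesis
    unfolding min_gens_def gens by blast
qed

lemma finite_min_gens_Istar_gens:
  assumes "P \<subseteq> Pow {0..<n}"
  shows "finite (min_gens (Istar_gens n (Cfam P)))"
  using finite_subset[OF assms] by (simp add: min_gens_Istar_gens[OF assms])

lemma squarefree_eq_mAB:
  assumes "is_monomial n u" "\<forall>v. u v \<le> 1" "divides_mon (star_gen n C) u"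
  shows "\<exists>A B. A \<subseteq> B \<and> B \<subseteq> {0..<n} \<and> u = mAB n A B"
proof -
  define A where "A = {i. i < n \<and> u (i, 1) = 0}"
  define B where "B = {i. i < n \<and> u (i, 0) \<noteq> 0}"
  have "A \<subseteq> B"
    using assms(3) unfolding A_def B_def divides_star_gen_iff by auto
  moreover have "u = mAB n A B"
  proof
    fix v :: "nat \<times> nat"
    obtain i b where v: "v = (i, b)"
      by (cases v)
    show "u v = mAB n A B v"
    proof (cases "i < n \<and> b < 2")
      case True
      then have "b = 0 \<or> b = 1"
        by auto
      moreover have "u (i, 0) \<le> 1" "u (i, 1) \<le> 1"
        using assms(2) by auto
      ultimately show ?thesis
        using True \<open>A \<subseteq> B\<close> unfolding v by (auto simp: mAB_apply A_def B_def)
    next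
      case False
      then have "u v = 0"
        using assms(1) unfolding is_monomial_def vars_def v by auto
      then show ?thesis
        using False by (auto simp: v mAB_apply)
    qed
  qed
  moreover have "B \<subseteq> {0..<n}"
    unfolding B_def by auto
  ultimately show ?thesis
    by blast
qed

lemma divides_star_gen_mAB_iff:
  assumes "A \<subseteq> B" "B \<subseteq> {0..<n}" "C \<subseteq> {0..<n}"
  shows "divides_mon (star_gen n C) (mAB n A B) \<longleftrightarrow> A \<subseteq> C \<and> C \<subseteq> B"
proof -
  have "0 < mAB n A B (i, 0) \<longleftrightarrow> i \<in> B" "0 < mAB n A B (i, 1) \<longleftrightarrow> i < n \<and> i \<notin> A" for i
    using assms(1,2) by (auto simp: mAB_apply)
  moreover have "i < n" if "i \<in> B \<or> i \<in> C" for i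
    using assms(2,3) that by auto
  ultimately show ?thesis
    unfolding divides_star_gen_iff using assms(1) by blast
qed

lemma gens_dividing_mAB:
  assumes "P \<subseteq> Pow {0..<n}" "A \<subseteq> B" "B \<subseteq> {0..<n}"
  shows "gens_dividing (Istar_gens n (Cfam P)) (mAB n A B) = star_gen n ` interval P A B"
  using assms divides_star_gen_mAB_iff[OF assms(2,3)]
  by (auto simp: gens_dividing_def min_gens_Istar_gens interval_def)

lemma linked_star_gen_mAB_iff:
  assumes "P \<subseteq> Pow {0..<n}" "A \<subseteq> B" "B \<subseteq> {0..<n}"
    and "C \<in> interval P A B" "D \<in> interval P A B"
  shows "linked (Istar_gens n (Cfam P)) (mAB n A B) (star_gen n C) (star_gen n D) \<longleftrightarrow>
    \<not> (B \<subseteq> C \<union> D \<and> C \<inter> D \<subseteq> A)"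
proof -
  have "star_gen n C (i, b) < mAB n A B (i, b) \<and> star_gen n D (i, b) < mAB n A B (i, b) \<longleftrightarrow>
      i < n \<and> (b = 0 \<and> i \<in> B \<and> i \<notin> C \<and> i \<notin> D \<or> b = 1 \<and> i \<notin> A \<and> i \<in> C \<and> i \<in> D)"
    for i b
    using assms(2) by (auto simp: star_gen_apply mAB_apply)
  moreover have "i < n" if "i \<in> B \<or> i \<in> C" for i
    using assms(3,4) that by (auto simp: interval_def)
  moreover have "linked (Istar_gens n (Cfam P)) (mAB n A B) (star_gen n C) (star_gen n D) \<longleftrightarrow>
      (\<exists>i b. star_gen n C (i, b) < mAB n A B (i, b) \<and> star_gen n D (i, b) < mAB n A B (i, b))"
    using assms by (subst linked_iff_exponent) (auto simp: gens_dividing_mAB)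
  ultimately show ?thesis
    by blast
qed

section \<open>The first Betti numbers of I*_C\<close>

lemma betti1_mAB_cover:
  assumes P: "P \<subseteq> Pow {0..<n}" and "A \<in> P" "B \<in> P" "covers P A B"
  shows "betti1 TYPE('k::field) (Istar_gens n (Cfam P)) (mAB n A B) = 1"
proof -
  have "A \<subset> B" "B \<subseteq> {0..<n}"
    using assms unfolding covers_def by auto
  have "interval P A B = {A, B}"
    using assms unfolding covers_def interval_def by auto
  then have Gu: "gens_dividing (Istar_gens n (Cfam P)) (mAB n A B) = {star_gen n A, star_gen n B}"
    using gens_dividing_mAB[OF P] \<open>A \<subset> B\<close> \<open>B \<subseteq> {0..<n}\<close> by simp
  have "star_gen n A \<noteq> star_gen n B"
    using star_gen_dvd_imp_eq[of B n A] \<open>A \<subset> B\<close> \<open>B \<subseteq> {0..<n}\<close> by (auto simp: divides_mon_def)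
  moreover have "\<not> linked (Istar_gens n (Cfam P)) (mAB n A B) (star_gen n A) (star_gen n B)"
    using linked_star_gen_mAB_iff[OF P] \<open>interval P A B = {A, B}\<close> \<open>A \<subset> B\<close> \<open>B \<subseteq> {0..<n}\<close>
    by auto
  ultimately show ?thesis
    using betti1_eq_1_if_two_unlinked[OF finite_min_gens_Istar_gens[OF P] Gu] by blast
qed

lemma rtranclp_linked_bottom_star_gen:
  assumes P: "P \<subseteq> Pow {0..<n}" and "A \<subseteq> B" "B \<subseteq> {0..<n}" "A \<in> P"
    and not_cover: "\<not> (B \<in> P \<and> covers P A B)" and "D \<in> interval P A B"
  shows "(linked (Istar_gens n (Cfam P)) (mAB n A B))\<^sup>*\<^sup>* (star_gen n A) (star_gen n D)"
proof -
  let ?G = "Istar_gens n (Cfam P)" and ?u = "mAB n A B"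
  have link: "linked ?G ?u (star_gen n C) (star_gen n C')"
    if "C \<in> interval P A B" "C' \<in> interval P A B" "\<not> B \<subseteq> C \<union> C' \<or> \<not> C \<inter> C' \<subseteq> A" for C C'
    using linked_star_gen_mAB_iff[OF P \<open>A \<subseteq> B\<close> \<open>B \<subseteq> {0..<n}\<close> that(1,2)] that(3) by blast
  have "A \<in> interval P A B"
    unfolding interval_def using \<open>A \<in> P\<close> \<open>A \<subseteq> B\<close> by blast
  consider "D = A" | "D \<noteq> A" "D \<noteq> B" | "D = B" "A \<noteq> B"
    by blast
  then show ?thesis
  proof cases
    case 1
    then show ?thesis
      by simp
  next
    case 2
    then have "\<not> B \<subseteq> A \<union> D"
      using \<open>D \<in> interval P A B\<close> unfolding interval_def by blast
    with \<open>A \<in> interval P A B\<close> \<open>D \<in> interval P A B\<close> show ?thesis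
      by (blast intro: link r_into_rtranclp)
  next
    case 3
    then have "\<not> covers P A B"
      using not_cover \<open>D \<in> interval P A B\<close> unfolding interval_def by blast
    then obtain C where "C \<in> P" "A \<subset> C" "C \<subset> B"
      using 3 \<open>A \<subseteq> B\<close> unfolding covers_def by blast
    then have "C \<in> interval P A B" "\<not> B \<subseteq> A \<union> C" "\<not> C \<inter> D \<subseteq> A"
      using 3 unfolding interval_def by auto
    with \<open>A \<in> interval P A B\<close> \<open>D \<in> interval P A B\<close>
    have "linked ?G ?u (star_gen n A) (star_gen n C)" "linked ?G ?u (star_gen n C) (star_gen n D)"
      by (blast intro: link)+
    then show ?thesis
      by (blast intro: r_into_rtranclp rtranclp.rtrancl_into_rtrancl)
  qed
qed

lemma betti1_mAB_eq_0_if_bottom_mem: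
  assumes P: "P \<subseteq> Pow {0..<n}" and "A \<subseteq> B" "B \<subseteq> {0..<n}" "A \<in> P"
    and "\<not> (B \<in> P \<and> covers P A B)"
  shows "betti1 TYPE('k::field) (Istar_gens n (Cfam P)) (mAB n A B) = 0"
  using finite_min_gens_Istar_gens[OF P] rtranclp_linked_bottom_star_gen[OF assms]
  by (intro betti1_eq_0_if_connected[where center = "star_gen n A"])
    (auto simp: gens_dividing_mAB[OF P \<open>A \<subseteq> B\<close> \<open>B \<subseteq> {0..<n}\<close>])

lemma betti1_mAB_eq_0_if_bottom_not_mem:
  assumes P: "P \<subseteq> Pow {0..<n}" and closed: "intersection_closed P"
    and "A \<subseteq> B" "B \<subseteq> {0..<n}" "A \<notin> P"
  shows "betti1 TYPE('k::field) (Istar_gens n (Cfam P)) (mAB n A B) = 0"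
proof -
  let ?G = "Istar_gens n (Cfam P)" and ?u = "mAB n A B"
  have "linked ?G ?u (star_gen n C) (star_gen n D)"
    if "C \<in> interval P A B" "D \<in> interval P A B" for C D
  proof -
    have "C \<in> P" "D \<in> P" "A \<subseteq> C \<inter> D"
      using that unfolding interval_def by auto
    then have "C \<inter> D \<noteq> A"
      using closed \<open>A \<notin> P\<close> unfolding intersection_closed_def by auto
    with \<open>A \<subseteq> C \<inter> D\<close> have "\<not> C \<inter> D \<subseteq> A"
      by blast
    then show ?thesis
      using linked_star_gen_mAB_iff[OF P \<open>A \<subseteq> B\<close> \<open>B \<subseteq> {0..<n}\<close> that] by blast
  qed
  then have "linked ?G ?u g h" if "g \<in> gens_dividing ?G ?u" "h \<in> gens_dividing ?G ?u" for g h
    using that unfolding gens_dividing_mAB[OF P \<open>A \<subseteq> B\<close> \<open>B \<subseteq> {0..<n}\<close>] by (auto simp only: image_iff)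
  with finite_min_gens_Istar_gens[OF P] show ?thesis
    by (intro betti1_eq_0_if_pairwise_linked) auto
qed

lemma betti1_Istar_gens_eq_0_if_exponent_ge_2:
  assumes P: "P \<subseteq> Pow {0..<n}" and "2 \<le> u v"
  shows "betti1 TYPE('k::field) (Istar_gens n (Cfam P)) u = 0"
proof -
  let ?G = "Istar_gens n (Cfam P)"
  have "linked ?G u g h" if "g \<in> gens_dividing ?G u" "h \<in> gens_dividing ?G u" for g h
  proof -
    have "g \<in> star_gen n ` P" "h \<in> star_gen n ` P"
      using that by (auto simp: gens_dividing_def min_gens_Istar_gens[OF P])
    then have "g v \<le> 1" "h v \<le> 1"
      using star_gen_le_1 by blast+
    with \<open>2 \<le> u v\<close> have "g v < u v" "h v < u v"
      by linarith+
    with that show ?thesis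
      using linked_iff_exponent by blast
  qed
  with finite_min_gens_Istar_gens[OF P] show ?thesis
    by (intro betti1_eq_0_if_pairwise_linked) auto
qed

lemma betti1_Istar_gens_eq_0:
  assumes P: "P \<subseteq> Pow {0..<n}" and closed: "intersection_closed P" and "is_monomial n u"
    and not_cover: "\<not> (\<exists>A\<in>P. \<exists>B\<in>P. covers P A B \<and> u = mAB n A B)"
  shows "betti1 TYPE('k::field) (Istar_gens n (Cfam P)) u = 0"
proof -
  let ?G = "Istar_gens n (Cfam P)"
  consider (non_squarefree) v where "2 \<le> u v" | (no_gens) "gens_dividing ?G u = {}"
    | (squarefree) g where "\<forall>v. u v \<le> 1" "g \<in> gens_dividing ?G u"
  proof -
    have "u v \<le> 1" if "\<forall>w. \<not> 2 \<le> u w" for v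
      using that[rule_format, of v] by linarith
    then show thesis
      using that by blast
  qed
  then show ?thesis
  proof cases
    case non_squarefree
    with P show ?thesis
      by (rule betti1_Istar_gens_eq_0_if_exponent_ge_2)
  next
    case no_gens
    with finite_min_gens_Istar_gens[OF P] show ?thesis
      by (intro betti1_eq_0_if_pairwise_linked) auto
  next
    case squarefree
    then obtain C where "divides_mon (star_gen n C) u"
      by (auto simp: gens_dividing_def min_gens_Istar_gens[OF P])
    with squarefree obtain A B where "A \<subseteq> B" "B \<subseteq> {0..<n}" "u = mAB n A B"
      using squarefree_eq_mAB[OF \<open>is_monomial n u\<close>] by blast
    show ?thesis
    proof (cases "A \<in> P")
      case True
      with not_cover \<open>u = mAB n A B\<close> have "\<not> (B \<in> P \<and> covers P A B)"
        by blast
      with True show ?thesis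
        using betti1_mAB_eq_0_if_bottom_mem[OF P \<open>A \<subseteq> B\<close> \<open>B \<subseteq> {0..<n}\<close>] \<open>u = mAB n A B\<close>
        by simp
    next
      case False
      then show ?thesis
        using betti1_mAB_eq_0_if_bottom_not_mem[OF P closed \<open>A \<subseteq> B\<close> \<open>B \<subseteq> {0..<n}\<close>]
          \<open>u = mAB n A B\<close>
        by simp
    qed
  qed
qed

theorem mainTheorem5:
  fixes n :: nat and P :: "nat set set"
  assumes "P \<subseteq> Pow {0..<n}" and "P \<noteq> {}" and "intersection_closed P"
  shows "(\<forall>m. is_monomial n m \<longrightarrow>
            ((betti1 TYPE('k::field) (Istar_gens n (Cfam P)) m \<noteq> 0 \<longleftrightarrow>
                (\<exists>A\<in>P. \<exists>B\<in>P. covers P A B \<and> m = mAB n A B))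
             \<and> (betti1 TYPE('k) (Istar_gens n (Cfam P)) m \<noteq> 0 \<longrightarrow>
                betti1 TYPE('k) (Istar_gens n (Cfam P)) m = 1)))
         \<and> bij_betw (\<lambda>(A, B). mAB n A B)
             {(A, B). A \<in> P \<and> B \<in> P \<and> covers P A B}
             {m. is_monomial n m \<and> betti1 TYPE('k) (Istar_gens n (Cfam P)) m \<noteq> 0}"
proof -
  let ?b = "betti1 TYPE('k) (Istar_gens n (Cfam P))"
  let ?covers = "{(A, B). A \<in> P \<and> B \<in> P \<and> covers P A B}"
  have betti: "(?b m \<noteq> 0 \<longleftrightarrow> (\<exists>A\<in>P. \<exists>B\<in>P. covers P A B \<and> m = mAB n A B)) \<and> (?b m \<noteq> 0 \<longrightarrow> ?b m = 1)"
    if "is_monomial n m" for m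
    using betti1_mAB_cover[OF assms(1)] betti1_Istar_gens_eq_0[where 'k = 'k, OF assms(1,3) that]
    by (cases "\<exists>A\<in>P. \<exists>B\<in>P. covers P A B \<and> m = mAB n A B") auto
  have "?covers \<subseteq> {(A, B). A \<subseteq> B \<and> B \<subseteq> {0..<n}}"
    using assms(1) unfolding covers_def by auto
  then have "inj_on (\<lambda>(A, B). mAB n A B) ?covers"
    by (rule inj_on_subset[OF inj_on_mAB])
  moreover have "(\<lambda>(A, B). mAB n A B) ` ?covers = {m. is_monomial n m \<and> ?b m \<noteq> 0}"
    using betti mAB_is_monomial by fastforce
  ultimately show ?thesis
    using betti unfolding bij_betw_def by blast
qed

end
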